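(* Let $(\Omega,\mathcal{A},\sigma)$ be a probability space and let $f,g\in L^2(\sigma)$ satisfy $\sigma(\{|fg|=0\})=0$. Then (A) $\mathcal{E}(f\wedge g)\le\mathcal{E}(f)+\mathcal{E}(g)$; (B) $\mathcal{E}(f\vee g)\le\mathcal{E}(f)+\mathcal{E}(g)$; (C) $\mathcal{E}(f\wedge f^2)\le4\,\mathcal{E}(f)$.
   Context: $\mathcal{E}(h)=\int_\Omega|h|^2\,d\sigma-\exp\left(\int_\Omega\log|h|^2\,d\sigma\right)$. For measurable $f,g$, $f\wedge g$ (resp. $f\vee g$) denotes a measurable function with $|f\wedge g|=\min(|f|,|g|)$ (resp. $|f\vee g|=\max(|f|,|g|)$) pointwise (e.g. equal to $g$ where $|g|\le|f|$ and to $f$ elsewhere); $\mathcal{E}$ depends only on the modulus. *)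

theory Defs
  imports "HOL-Probability.Probability"
begin

text \<open>Geometric-mean term exp(\<integral> log|h|^2 d\<sigma>), with the convention exp(-\<infinity>) = 0:
  for h in L^2 the positive part of log|h|^2 is integrable, so non-integrability
  of log|h|^2 means its integral is -\<infinity>.\<close>
definition geo_term :: "'a measure \<Rightarrow> ('a \<Rightarrow> complex) \<Rightarrow> real" where
  "geo_term M h =
     (if integrable M (\<lambda>x. ln ((cmod (h x))\<^sup>2))
      then exp (\<integral>x. ln ((cmod (h x))\<^sup>2) \<partial>M) else 0)"

definition Edef :: "'a measure \<Rightarrow> ('a \<Rightarrow> complex) \<Rightarrow> real" where
  "Edef M h = (\<integral>x. (cmod (h x))\<^sup>2 \<partial>M) - geo_term M h"

definition L2 :: "'a measure \<Rightarrow> ('a \<Rightarrow> complex) set" where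
  "L2 M = {h. h \<in> borel_measurable M \<and> integrable M (\<lambda>x. (cmod (h x))\<^sup>2)}"

end

theory Submission
  imports Defs
begin

(* Write G w = exp (\<integral> ln w) for the geometric mean, so that E h = \<integral> w - G w with w = |h|^2,
   and E \<ge> 0 by Jensen's inequality for ln.

   (A), (B): G is monotone and multiplicative, and min u v * max u v = u v, so
   G (min u v) * G (max u v) = G u * G v with G u, G v \<le> G (max u v).  This forces
   G u + G v \<le> G (min u v) + G (max u v); as \<integral> min u v + \<integral> max u v = \<integral> u + \<integral> v, we get
   E (min u v) + E (max u v) \<le> E u + E v.

   (C): split u = a b with a = min 1 u and b = max 1 u, so that min u u^2 = a^2 b.  With
   p = G a \<le> 1 \<le> q = G b the claim reduces to q \<le> \<integral> b and 4 p - p^2 \<le> \<integral> (4 a - a^2).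
   The latter is Jensen's inequality for t \<mapsto> 4 e^t - e^(2t), which is convex on t \<le> 0,
   applied to ln a \<le> 0 (via its tangent at t0 = \<integral> ln a).  What remains is
   (q - 1) (1 - p) (3 - p) \<ge> 0. *)

definition geom_mean :: "'a measure \<Rightarrow> ('a \<Rightarrow> real) \<Rightarrow> real" where
  "geom_mean M w = (if integrable M (\<lambda>x. ln (w x)) then exp (\<integral>x. ln (w x) \<partial>M) else 0)"

definition energy :: "'a measure \<Rightarrow> ('a \<Rightarrow> real) \<Rightarrow> real" where
  "energy M w = integral\<^sup>L M w - geom_mean M w"

lemma Edef_eq_energy: "Edef M h = energy M (\<lambda>x. (cmod (h x))\<^sup>2)"
  by (simp add: Edef_def energy_def geo_term_def geom_mean_def)

lemma geom_mean_nonneg: "0 \<le> geom_mean M w"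
  by (simp add: geom_mean_def)

lemma integrable_ln_between:
  fixes u v w :: "'a \<Rightarrow> real"
  assumes "integrable M (\<lambda>x. ln (u x))" "integrable M (\<lambda>x. ln (v x))"
    and "w \<in> borel_measurable M"
    and "AE x in M. 0 < u x \<and> 0 < v x \<and> min (u x) (v x) \<le> w x \<and> w x \<le> max (u x) (v x)"
  shows "integrable M (\<lambda>x. ln (w x))"
proof (rule Bochner_Integration.integrable_bound)
  show "integrable M (\<lambda>x. \<bar>ln (u x)\<bar> + \<bar>ln (v x)\<bar>)"
    using assms(1,2) by auto
  show "AE x in M. norm (ln (w x)) \<le> norm (\<bar>ln (u x)\<bar> + \<bar>ln (v x)\<bar>)"
    using assms(4)
  proof eventually_elim
    case (elim x)
    then have "0 < min (u x) (v x)"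
      by simp
    then have "ln (min (u x) (v x)) \<le> ln (w x)" "ln (w x) \<le> ln (max (u x) (v x))"
      using elim by (meson ln_mono order_less_le_trans)+
    then show ?case
      by (cases "u x \<le> v x") (auto simp: min_def max_def)
  qed
qed (use assms(3) in measurable)

lemma integrable_ln_mult:
  fixes a b :: "'a \<Rightarrow> real"
  assumes "integrable M (\<lambda>x. ln (a x))" "integrable M (\<lambda>x. ln (b x))"
    and "a \<in> borel_measurable M" "b \<in> borel_measurable M"
    and "AE x in M. 0 < a x \<and> 0 < b x"
  shows "integrable M (\<lambda>x. ln (a x * b x))"
proof -
  have sum: "integrable M (\<lambda>x. ln (a x) + ln (b x))"
    using assms(1,2) by auto
  have ae: "AE x in M. ln (a x) + ln (b x) = ln (a x * b x)"
    using assms(5) by eventually_elim (simp add: ln_mult_pos)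
  show ?thesis
    by (rule integrable_cong_AE_imp[OF sum _ ae]) (use assms(3,4) in measurable)
qed

lemma geom_mean_mult:
  fixes a b :: "'a \<Rightarrow> real"
  assumes "integrable M (\<lambda>x. ln (a x))" "integrable M (\<lambda>x. ln (b x))"
    and "a \<in> borel_measurable M" "b \<in> borel_measurable M"
    and "AE x in M. 0 < a x \<and> 0 < b x"
  shows "geom_mean M (\<lambda>x. a x * b x) = geom_mean M a * geom_mean M b"
proof -
  have "(\<integral>x. ln (a x * b x) \<partial>M) = (\<integral>x. ln (a x) + ln (b x) \<partial>M)"
    using assms(3-5) by (intro integral_cong_AE) (auto elim: eventually_mono simp: ln_mult)
  then show ?thesis
    using assms integrable_ln_mult[OF assms] by (simp add: geom_mean_def exp_add)
qed

lemma (in prob_space) geom_mean_le_integral: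
  assumes w: "integrable M w" and pos: "AE x in M. 0 < w x"
  shows "geom_mean M w \<le> integral\<^sup>L M w"
proof (cases "integrable M (\<lambda>x. ln (w x))")
  case True
  define c where "c = exp (\<integral>x. ln (w x) \<partial>M)"
  have c: "0 < c" by (simp add: c_def)
  have "AE x in M. 1 + ln (w x) - ln c \<le> w x / c"
    using pos
  proof eventually_elim
    case (elim x)
    have "ln (w x / c) \<le> w x / c - 1" using elim c by (intro ln_le_minus_one) simp
    moreover have "ln (w x / c) = ln (w x) - ln c" using elim c by (simp add: ln_div)
    ultimately show ?case by simp
  qed
  then have "(\<integral>x. 1 + ln (w x) - ln c \<partial>M) \<le> (\<integral>x. w x / c \<partial>M)"
    using True w by (intro integral_mono_AE) auto
  moreover have "(\<integral>x. 1 + ln (w x) - ln c \<partial>M) = 1 + (\<integral>x. ln (w x) \<partial>M) - ln c"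
    using True by (simp add: prob_space)
  moreover have "ln c = (\<integral>x. ln (w x) \<partial>M)" by (simp add: c_def)
  ultimately have "1 \<le> integral\<^sup>L M w / c" by simp
  then have "c \<le> integral\<^sup>L M w" using c by (simp add: field_simps)
  then show ?thesis using True by (simp add: geom_mean_def c_def)
next
  case False
  then show ?thesis
    using pos by (simp add: geom_mean_def integral_nonneg_AE eventually_mono less_imp_le)
qed

lemma (in prob_space) geom_mean_mono:
  assumes w2: "integrable M w2" and pos: "AE x in M. 0 < w1 x" and le: "AE x in M. w1 x \<le> w2 x"
  shows "geom_mean M w1 \<le> geom_mean M w2"
proof (cases "integrable M (\<lambda>x. ln (w1 x))")
  case True
  have ln_w2: "integrable M (\<lambda>x. ln (w2 x))"
  proof (rule Bochner_Integration.integrable_bound)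
    show "integrable M (\<lambda>x. \<bar>ln (w1 x)\<bar> + w2 x)" using True w2 by auto
    show "AE x in M. norm (ln (w2 x)) \<le> norm (\<bar>ln (w1 x)\<bar> + w2 x)"
      using pos le
    proof eventually_elim
      case (elim x)
      have "ln (w2 x) \<le> w2 x - 1" using elim by (intro ln_le_minus_one) simp
      moreover have "ln (w1 x) \<le> ln (w2 x)" using elim by simp
      ultimately show ?case
        using elim unfolding real_norm_def by arith
    qed
  qed (use w2 in measurable)
  have "(\<integral>x. ln (w1 x) \<partial>M) \<le> (\<integral>x. ln (w2 x) \<partial>M)"
    using True ln_w2 pos le by (intro integral_mono_AE) (auto elim: eventually_mono)
  then show ?thesis using True ln_w2 by (simp add: geom_mean_def)
qed (simp add: geom_mean_def)

lemma (in prob_space) geom_mean_le_one: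
  assumes "AE x in M. 0 < a x \<and> a x \<le> 1"
  shows "geom_mean M a \<le> 1"
  using geom_mean_mono[of "\<lambda>_. 1" a] assms by (auto simp: geom_mean_def elim: eventually_mono)

lemma (in prob_space) one_le_geom_mean:
  assumes "integrable M b" "AE x in M. 1 \<le> b x"
  shows "1 \<le> geom_mean M b"
  using geom_mean_mono[OF assms(1), of "\<lambda>_. 1"] assms(2) by (simp add: geom_mean_def)

lemma (in prob_space) energy_nonneg:
  assumes "integrable M w" "AE x in M. 0 < w x"
  shows "0 \<le> energy M w"
  using geom_mean_le_integral[OF assms] by (simp add: energy_def)

lemma add_le_add_of_mult_eq:
  fixes a b m n :: real
  assumes "0 \<le> m" "a \<le> n" "b \<le> n" "m * n = a * b"
  shows "a + b \<le> m + n"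
proof (cases "n = 0")
  case False
  have "0 < n"
  proof (rule ccontr)
    assume "\<not> 0 < n"
    with False have "n < 0" by simp
    then have "0 < a * b" using assms(2,3) by (simp add: mult_neg_neg)
    moreover have "m * n \<le> 0" using assms(1) \<open>n < 0\<close> by (simp add: mult_nonneg_nonpos)
    ultimately show False using assms(4) by simp
  qed
  have "n * (a + b) \<le> n * (m + n)"
    using mult_nonneg_nonneg[of "n - a" "n - b"] assms by (simp add: algebra_simps)
  then show ?thesis using \<open>0 < n\<close> by simp
qed (use assms in auto)

lemma (in prob_space) geom_mean_min_max:
  assumes u: "integrable M u" and v: "integrable M v" and pos: "AE x in M. 0 < u x \<and> 0 < v x"
  shows "geom_mean M u + geom_mean M v
    \<le> geom_mean M (\<lambda>x. min (u x) (v x)) + geom_mean M (\<lambda>x. max (u x) (v x))"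
proof -
  have max: "integrable M (\<lambda>x. max (u x) (v x))" using u v by (rule integrable_max)
  have u_max: "geom_mean M u \<le> geom_mean M (\<lambda>x. max (u x) (v x))"
    using pos by (intro geom_mean_mono[OF max]) (auto elim: eventually_mono)
  have v_max: "geom_mean M v \<le> geom_mean M (\<lambda>x. max (u x) (v x))"
    using pos by (intro geom_mean_mono[OF max]) (auto elim: eventually_mono)
  show ?thesis
  proof (cases "integrable M (\<lambda>x. ln (u x)) \<and> integrable M (\<lambda>x. ln (v x))")
    case True
    have ln_min: "integrable M (\<lambda>x. ln (min (u x) (v x)))"
      and ln_max: "integrable M (\<lambda>x. ln (max (u x) (v x)))"
      using True pos u v by (auto intro!: integrable_ln_between[of M u v] elim: eventually_mono)
    have "geom_mean M (\<lambda>x. min (u x) (v x)) * geom_mean M (\<lambda>x. max (u x) (v x))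
        = geom_mean M (\<lambda>x. min (u x) (v x) * max (u x) (v x))"
      using ln_min ln_max u v pos by (intro geom_mean_mult[symmetric]) (auto elim: eventually_mono)
    also have "(\<lambda>x. min (u x) (v x) * max (u x) (v x)) = (\<lambda>x. u x * v x)"
      by (auto simp: min_def max_def)
    also have "geom_mean M \<dots> = geom_mean M u * geom_mean M v"
      using True u v pos by (intro geom_mean_mult) auto
    finally show ?thesis
      using u_max v_max geom_mean_nonneg by (intro add_le_add_of_mult_eq)
  next
    case False
    then have "geom_mean M u = 0 \<or> geom_mean M v = 0"
      by (simp add: geom_mean_def)
    then show ?thesis
      using u_max v_max geom_mean_nonneg[of M "\<lambda>x. min (u x) (v x)"] by auto
  qed
qed

lemma (in prob_space) energy_min_add_energy_max_le:
  assumes u: "integrable M u" and v: "integrable M v" and pos: "AE x in M. 0 < u x \<and> 0 < v x"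
  shows "energy M (\<lambda>x. min (u x) (v x)) + energy M (\<lambda>x. max (u x) (v x)) \<le> energy M u + energy M v"
proof -
  have "(\<integral>x. min (u x) (v x) \<partial>M) + (\<integral>x. max (u x) (v x) \<partial>M) = (\<integral>x. min (u x) (v x) + max (u x) (v x) \<partial>M)"
    using u v by simp
  also have "\<dots> = (\<integral>x. u x + v x \<partial>M)"
    by (rule Bochner_Integration.integral_cong) (auto simp: min_def max_def)
  finally show ?thesis
    using geom_mean_min_max[OF assms] u v by (simp add: energy_def)
qed

lemma (in prob_space) energy_min_max_le:
  assumes "integrable M u" "integrable M v" "AE x in M. 0 < u x \<and> 0 < v x"
  shows "energy M (\<lambda>x. min (u x) (v x)) \<le> energy M u + energy M v"
    and "energy M (\<lambda>x. max (u x) (v x)) \<le> energy M u + energy M v"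
proof -
  have "0 \<le> energy M (\<lambda>x. min (u x) (v x))" "0 \<le> energy M (\<lambda>x. max (u x) (v x))"
    using assms by (auto intro!: energy_nonneg elim: eventually_mono)
  with energy_min_add_energy_max_le[OF assms]
  show "energy M (\<lambda>x. min (u x) (v x)) \<le> energy M u + energy M v"
    and "energy M (\<lambda>x. max (u x) (v x)) \<le> energy M u + energy M v"
    by linarith+
qed

lemma quadratic_ln_tangent:
  fixes x p :: real
  assumes x: "0 < x" "x \<le> 1" and p: "0 < p" "p \<le> 1"
  shows "4 * p - p\<^sup>2 + (4 * p - 2 * p\<^sup>2) * (ln x - ln p) \<le> 4 * x - x\<^sup>2"
proof -
  define c where "c = 4 * p - 2 * p\<^sup>2"
  define D where "D y = 4 * y - y\<^sup>2 - c * ln y" for y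
  have D': "DERIV D y :> 2 * (y - p) * (2 - y - p) / y" if "0 < y" for y
  proof -
    have "DERIV D y :> 4 - 2 * y - c / y"
      unfolding D_def using that by (auto intro!: derivative_eq_intros simp: power2_eq_square)
    moreover have "4 - 2 * y - c / y = 2 * (y - p) * (2 - y - p) / y"
      using that by (simp add: c_def field_simps power2_eq_square)
    ultimately show ?thesis by simp
  qed
  have "D p \<le> D x"
  proof (cases "x \<le> p")
    case True
    show ?thesis
    proof (rule DERIV_nonpos_imp_nonincreasing[OF True])
      fix y assume "x \<le> y" "y \<le> p"
      then have "2 * (y - p) * (2 - y - p) / y \<le> 0"
        using x p by (intro divide_nonpos_pos mult_nonpos_nonneg[of "2 * (y - p)"]) auto
      then show "\<exists>d. DERIV D y :> d \<and> d \<le> 0"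
        using D' \<open>x \<le> y\<close> x by (meson order_less_le_trans)
    qed
  next
    case False
    show ?thesis
    proof (rule DERIV_nonneg_imp_nondecreasing[of p x D])
      show "p \<le> x" using False by simp
      fix y assume "p \<le> y" "y \<le> x"
      then have "0 \<le> 2 * (y - p) * (2 - y - p) / y"
        using x p by (intro divide_nonneg_pos mult_nonneg_nonneg) auto
      then show "\<exists>d. DERIV D y :> d \<and> 0 \<le> d"
        using D' \<open>p \<le> y\<close> p by (meson order_less_le_trans)
    qed
  qed
  then show ?thesis by (simp add: D_def c_def algebra_simps)
qed

lemma (in prob_space) quadratic_geom_mean_le:
  assumes a: "a \<in> borel_measurable M" and bounds: "AE x in M. 0 < a x \<and> a x \<le> 1"
  shows "4 * geom_mean M a - (geom_mean M a)\<^sup>2 \<le> (\<integral>x. 4 * a x - (a x)\<^sup>2 \<partial>M)"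
proof -
  have "AE x in M. norm (a x) \<le> 1"
    using bounds by eventually_elim simp
  then have ia: "integrable M a"
    using a by (rule integrable_const_bound)
  have "AE x in M. norm ((a x)\<^sup>2) \<le> 1"
    using bounds by eventually_elim (simp add: abs_square_le_1)
  then have ia2: "integrable M (\<lambda>x. (a x)\<^sup>2)"
    by (rule integrable_const_bound) (use a in measurable)
  show ?thesis
  proof (cases "integrable M (\<lambda>x. ln (a x))")
    case True
    define p where "p = geom_mean M a"
    have p: "0 < p" "ln p = (\<integral>x. ln (a x) \<partial>M)"
      using True by (simp_all add: p_def geom_mean_def)
    have "p \<le> 1"
      unfolding p_def using bounds by (rule geom_mean_le_one)
    define c where "c = 4 * p - 2 * p\<^sup>2"
    have "AE x in M. 4 * p - p\<^sup>2 + c * (ln (a x) - ln p) \<le> 4 * a x - (a x)\<^sup>2"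
      using bounds by eventually_elim (auto simp: c_def intro!: quadratic_ln_tangent p(1) \<open>p \<le> 1\<close>)
    then have "(\<integral>x. 4 * p - p\<^sup>2 + c * (ln (a x) - ln p) \<partial>M) \<le> (\<integral>x. 4 * a x - (a x)\<^sup>2 \<partial>M)"
      using True ia ia2 by (intro integral_mono_AE) auto
    moreover have "(\<integral>x. 4 * p - p\<^sup>2 + c * (ln (a x) - ln p) \<partial>M) = 4 * p - p\<^sup>2"
      using True by (simp add: prob_space p)
    ultimately show ?thesis
      by (simp add: p_def)
  next
    case False
    have "AE x in M. 0 \<le> 4 * a x - (a x)\<^sup>2"
      using bounds by eventually_elim (simp add: power2_eq_square)
    then show ?thesis
      using False by (simp add: geom_mean_def integral_nonneg_AE)
  qed
qed

lemma min_power2_eq: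
  fixes t :: real
  assumes "0 \<le> t"
  shows "min t (t\<^sup>2) = (if t \<le> 1 then t\<^sup>2 else t)"
  using assms mult_left_le[of t t] by (auto simp: power2_eq_square)

lemma integrable_min_power2:
  fixes u :: "'a \<Rightarrow> real"
  assumes u: "integrable M u" and nonneg: "\<And>x. 0 \<le> u x"
  shows "integrable M (\<lambda>x. min (u x) ((u x)\<^sup>2))"
proof (rule Bochner_Integration.integrable_bound[OF u])
  show "(\<lambda>x. min (u x) ((u x)\<^sup>2)) \<in> borel_measurable M"
    using u by measurable
qed (auto simp: nonneg)

lemma (in prob_space) geom_mean_split_at_one:
  fixes u :: "'a \<Rightarrow> real"
  assumes ln_u: "integrable M (\<lambda>x. ln (u x))" and u: "u \<in> borel_measurable M"
    and nonneg: "\<And>x. 0 \<le> u x" and pos: "AE x in M. 0 < u x"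
  defines "a \<equiv> \<lambda>x. min 1 (u x)" and "b \<equiv> \<lambda>x. max 1 (u x)"
  shows "geom_mean M u = geom_mean M a * geom_mean M b"
    and "geom_mean M (\<lambda>x. min (u x) ((u x)\<^sup>2)) = (geom_mean M a)\<^sup>2 * geom_mean M b"
proof -
  have ab: "a \<in> borel_measurable M" "b \<in> borel_measurable M"
    unfolding a_def b_def using u by measurable
  have pos_ab: "AE x in M. 0 < a x \<and> 0 < b x"
    using pos by eventually_elim (simp add: a_def b_def)
  have "integrable M (\<lambda>x. ln (a x))" "integrable M (\<lambda>x. ln (b x))"
    using ln_u pos ab by (auto intro!: integrable_ln_between[of M "\<lambda>_. 1" u]
        elim!: eventually_mono simp: a_def b_def)
  note ln_ab = this ab pos_ab
  have "u = (\<lambda>x. a x * b x)"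
    by (auto simp: a_def b_def min_def max_def)
  then show "geom_mean M u = geom_mean M a * geom_mean M b"
    using geom_mean_mult[OF ln_ab] by simp
  have "min (u x) ((u x)\<^sup>2) = a x * a x * b x" for x
    by (subst min_power2_eq[OF nonneg]) (auto simp: a_def b_def power2_eq_square)
  then have "geom_mean M (\<lambda>x. min (u x) ((u x)\<^sup>2)) = geom_mean M (\<lambda>x. a x * a x * b x)"
    by simp
  also have "\<dots> = geom_mean M (\<lambda>x. a x * a x) * geom_mean M b"
    using ln_ab by (intro geom_mean_mult integrable_ln_mult) (auto elim: eventually_mono)
  also have "geom_mean M (\<lambda>x. a x * a x) = (geom_mean M a)\<^sup>2"
    using ln_ab by (subst geom_mean_mult) (auto simp: power2_eq_square elim: eventually_mono)
  finally show "geom_mean M (\<lambda>x. min (u x) ((u x)\<^sup>2)) = (geom_mean M a)\<^sup>2 * geom_mean M b" .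
qed

lemma (in prob_space) energy_min_power2_le_if_integrable_ln:
  fixes u :: "'a \<Rightarrow> real"
  assumes u: "integrable M u" and ln_u: "integrable M (\<lambda>x. ln (u x))"
    and nonneg: "\<And>x. 0 \<le> u x" and pos: "AE x in M. 0 < u x"
  shows "energy M (\<lambda>x. min (u x) ((u x)\<^sup>2)) \<le> 4 * energy M u"
proof -
  define k where "k x = min (u x) ((u x)\<^sup>2)" for x
  define a where "a x = min 1 (u x)" for x
  define b where "b x = max 1 (u x)" for x
  define p where "p = geom_mean M a"
  define q where "q = geom_mean M b"
  have k: "integrable M k"
    unfolding k_def[abs_def] using u nonneg by (rule integrable_min_power2)
  have a: "a \<in> borel_measurable M" "AE x in M. 0 < a x \<and> a x \<le> 1"
    using u pos by (auto simp: a_def[abs_def] elim: eventually_mono)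
  have b: "integrable M b" "AE x in M. 1 \<le> b x"
    using u by (simp_all add: b_def[abs_def])
  have split: "geom_mean M u = p * q" "geom_mean M k = p\<^sup>2 * q"
    using geom_mean_split_at_one[OF ln_u borel_measurable_integrable[OF u] nonneg pos]
    by (simp_all add: p_def q_def a_def[abs_def] b_def[abs_def] k_def[abs_def])
  have "(\<lambda>x. 4 * a x - (a x)\<^sup>2) = (\<lambda>x. 4 * u x - k x - 3 * (b x - 1))"
    using nonneg by (auto simp: a_def b_def k_def min_power2_eq)
  then have "4 * p - p\<^sup>2 \<le> 4 * integral\<^sup>L M u - integral\<^sup>L M k - 3 * (integral\<^sup>L M b - 1)"
    using quadratic_geom_mean_le[OF a] u k b by (simp add: p_def prob_space)
  moreover have "q \<le> integral\<^sup>L M b"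
    unfolding q_def using b by (intro geom_mean_le_integral) (auto elim: eventually_mono)
  moreover have "0 \<le> (q - 1) * (1 - p) * (3 - p)"
    using geom_mean_le_one[OF a(2)] one_le_geom_mean[OF b]
    by (intro mult_nonneg_nonneg) (auto simp: p_def q_def)
  moreover have "(q - 1) * (1 - p) * (3 - p) = 3 * q - 4 * (p * q) + p\<^sup>2 * q - 3 + 4 * p - p\<^sup>2"
    by (simp add: algebra_simps power2_eq_square)
  ultimately have "energy M k \<le> 4 * energy M u"
    using split by (simp add: energy_def)
  then show ?thesis
    by (simp add: k_def[abs_def])
qed

lemma (in prob_space) energy_min_power2_le:
  fixes u :: "'a \<Rightarrow> real"
  assumes u: "integrable M u" and nonneg: "\<And>x. 0 \<le> u x" and pos: "AE x in M. 0 < u x"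
  shows "energy M (\<lambda>x. min (u x) ((u x)\<^sup>2)) \<le> 4 * energy M u"
proof (cases "integrable M (\<lambda>x. ln (u x))")
  case True
  then show ?thesis
    using energy_min_power2_le_if_integrable_ln assms by blast
next
  case False
  have "integrable M (\<lambda>x. min (u x) ((u x)\<^sup>2))"
    using u nonneg by (rule integrable_min_power2)
  then have "(\<integral>x. min (u x) ((u x)\<^sup>2) \<partial>M) \<le> integral\<^sup>L M u"
    using u by (intro integral_mono) auto
  moreover have "geom_mean M u = 0"
    using False by (simp add: geom_mean_def)
  moreover have "0 \<le> integral\<^sup>L M u"
    using nonneg by simp
  ultimately show ?thesis
    using geom_mean_nonneg[of M "\<lambda>x. min (u x) ((u x)\<^sup>2)"] by (simp add: energy_def)
qed

lemma power2_min_nonneg: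
  fixes s t :: real
  shows "0 \<le> s \<Longrightarrow> 0 \<le> t \<Longrightarrow> (min s t)\<^sup>2 = min (s\<^sup>2) (t\<^sup>2)"
  by (auto simp: min_def power_mono intro: antisym)

lemma power2_max_nonneg:
  fixes s t :: real
  shows "0 \<le> s \<Longrightarrow> 0 \<le> t \<Longrightarrow> (max s t)\<^sup>2 = max (s\<^sup>2) (t\<^sup>2)"
  by (auto simp: max_def power_mono intro: antisym)

theorem mainTheorem8:
  fixes M :: "'a measure" and f g :: "'a \<Rightarrow> complex"
  assumes "prob_space M"
    and "f \<in> L2 M" and "g \<in> L2 M"
    and "measure M {x \<in> space M. cmod (f x * g x) = 0} = 0"
  shows "(\<forall>h \<in> borel_measurable M. (\<forall>x. cmod (h x) = min (cmod (f x)) (cmod (g x)))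
            \<longrightarrow> Edef M h \<le> Edef M f + Edef M g)
       \<and> (\<forall>h \<in> borel_measurable M. (\<forall>x. cmod (h x) = max (cmod (f x)) (cmod (g x)))
            \<longrightarrow> Edef M h \<le> Edef M f + Edef M g)
       \<and> (\<forall>h \<in> borel_measurable M. (\<forall>x. cmod (h x) = min (cmod (f x)) (cmod ((f x)\<^sup>2)))
            \<longrightarrow> Edef M h \<le> 4 * Edef M f)"
proof -
  interpret prob_space M by fact
  define u where "u x = (cmod (f x))\<^sup>2" for x
  define v where "v x = (cmod (g x))\<^sup>2" for x
  have f: "f \<in> borel_measurable M" and u: "integrable M u"
    and g: "g \<in> borel_measurable M" and v: "integrable M v"
    using assms(2,3) by (auto simp: L2_def u_def[abs_def] v_def[abs_def])
  have "{x \<in> space M. cmod (f x * g x) = 0} \<in> sets M"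
    using f g by measurable
  then have "AE x in M. cmod (f x * g x) \<noteq> 0"
    using assms(4) by (subst AE_iff_measurable) (auto simp: emeasure_eq_measure)
  then have pos: "AE x in M. 0 < u x \<and> 0 < v x"
    by eventually_elim (simp add: u_def v_def)
  have pos_u: "AE x in M. 0 < u x"
    using pos by eventually_elim simp
  have Edef_fg: "Edef M f = energy M u" "Edef M g = energy M v"
    by (simp_all add: Edef_eq_energy u_def[abs_def] v_def[abs_def])
  have "Edef M h \<le> Edef M f + Edef M g"
    if "\<forall>x. cmod (h x) = min (cmod (f x)) (cmod (g x))" for h
    using that energy_min_max_le(1)[OF u v pos]
    by (simp add: Edef_fg Edef_eq_energy u_def v_def power2_min_nonneg)
  moreover have "Edef M h \<le> Edef M f + Edef M g"
    if "\<forall>x. cmod (h x) = max (cmod (f x)) (cmod (g x))" for h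
    using that energy_min_max_le(2)[OF u v pos]
    by (simp add: Edef_fg Edef_eq_energy u_def v_def power2_max_nonneg)
  moreover have "Edef M h \<le> 4 * Edef M f"
    if "\<forall>x. cmod (h x) = min (cmod (f x)) (cmod ((f x)\<^sup>2))" for h
    using that energy_min_power2_le[OF u _ pos_u]
    by (simp add: Edef_fg Edef_eq_energy u_def power2_min_nonneg norm_power power_mult[symmetric])
  ultimately show ?thesis
    by blast
qed

end
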